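(* Let $K$ be a field (of arbitrary characteristic). Let $\{n_i\mid i\ge1\}$ be a strictly increasing infinite sequence of positive integers such that $n_{i+1}-n_i\ne 1$ for infinitely many $i\ge1$, and let $V$ be the $K$-subspace of $K[x]$ spanned by the monomials $x^{n_i}$ ($i\ge1$). Then the following are equivalent: 1) $\mathfrak{r}(V)=\{0\}$; 2) $V$ is a Mathieu subspace of $K[x]$; 3) there is no integer $d\ge1$ such that $md\in\{n_i\mid i\ge1\}$ for all $m\ge1$.
   Context: For a subset $V$ of $K[x]$, $\mathfrak{r}(V)=\{a\in K[x]\mid a^m\in V\text{ for all } m\gg0\}$. A $K$-subspace $V$ of a commutative $K$-algebra $\mathcal{A}$ is a Mathieu subspace if for all $a,b\in\mathcal{A}$ with $a^m\in V$ for all $m\ge 1$, one has $a^mb\in V$ for all $m\gg 0$. *)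

theory Defs
  imports "HOL-Computational_Algebra.Polynomial"
begin

text \<open>The K-subspace of K[x] spanned by the monomials x^k, k in S:
  exactly the polynomials whose support lies in S.\<close>
definition monomial_span :: "nat set \<Rightarrow> 'a::field poly set" where
  "monomial_span S = {p. \<forall>k. coeff p k \<noteq> 0 \<longrightarrow> k \<in> S}"

definition radical_r :: "'a::field poly set \<Rightarrow> 'a poly set" where
  "radical_r V = {a. \<exists>N. \<forall>m\<ge>N. a ^ m \<in> V}"

definition is_subspace :: "'a::field poly set \<Rightarrow> bool" where
  "is_subspace V \<longleftrightarrow> 0 \<in> V \<and> (\<forall>p\<in>V. \<forall>q\<in>V. p + q \<in> V) \<and> (\<forall>c. \<forall>p\<in>V. smult c p \<in> V)"

definition mathieu_subspace :: "'a::field poly set \<Rightarrow> bool" where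
  "mathieu_subspace V \<longleftrightarrow> is_subspace V \<and>
     (\<forall>a b. (\<forall>m\<ge>1. a ^ m \<in> V) \<longrightarrow> (\<exists>N. \<forall>m\<ge>N. a ^ m * b \<in> V))"

end

theory Submission
  imports Defs
begin

text \<open>If a nonzero a has a^m \<in> V for all large m, its lowest term x^k (k \<ge> 1 since 0 \<notin> S)
  gives x^(km) \<in> V for all large m, so the multiples of some d = kN all lie in S; conversely
  x^d lies in the radical then. If all multiples of d lie in S but infinitely many exponents do
  not, some residue r mod d is missed infinitely often, and b = x^r shows that V is not Mathieu.
  The gap hypothesis guarantees that infinitely many exponents n_i + 1 are missed.\<close>

lemma monom_in_monomial_span_iff: "monom (1::'a::field) j \<in> monomial_span S \<longleftrightarrow> j \<in> S"
  by (auto simp: monomial_span_def)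

lemma is_subspace_monomial_span: "is_subspace (monomial_span S)"
  by (auto simp: is_subspace_def monomial_span_def) (metis add.right_neutral)

lemma coeff_power_order_0_nonzero:
  fixes a :: "'a::field poly"
  assumes "a \<noteq> 0"
  shows "coeff (a ^ m) (order 0 a * m) \<noteq> 0"
proof -
  define k where "k = order 0 a"
  obtain q where q: "a = [:- 0, 1:] ^ k * q" "\<not> [:- 0, 1:] dvd q"
    using order_decomp[OF assms] unfolding k_def by blast
  have "coeff q 0 \<noteq> 0"
    using q(2) by (simp add: dvd_iff_poly_eq_0 poly_0_coeff_0)
  have "a = monom 1 k * q"
    using q(1) by (simp add: monom_altdef)
  hence "a ^ m = monom 1 (k * m) * q ^ m"
    by (simp add: power_mult_distrib monom_power)
  hence "coeff (a ^ m) (k * m) = coeff q 0 ^ m"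
    by (simp add: coeff_monom_mult coeff_0_power)
  with \<open>coeff q 0 \<noteq> 0\<close> show ?thesis by (simp add: k_def)
qed

lemma multiples_in_support_if_powers_in_monomial_span:
  fixes a :: "'a::field poly"
  assumes "a \<noteq> 0" and "0 \<notin> S" and powers: "\<forall>m\<ge>N. a ^ m \<in> monomial_span S"
  shows "\<exists>d\<ge>1. \<forall>m\<ge>1. m * d \<in> S"
proof -
  define k where "k = order 0 a"
  define N' where "N' = max N 1"
  have k_mult: "k * m \<in> S" if "m \<ge> N'" for m
    using powers coeff_power_order_0_nonzero[OF \<open>a \<noteq> 0\<close>, of m] that
    by (auto simp: N'_def k_def monomial_span_def)
  have "k \<noteq> 0" using k_mult[of N'] \<open>0 \<notin> S\<close> by (metis mult_zero_left order_refl)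
  moreover have "m * (k * N') \<in> S" if "m \<ge> 1" for m
    using k_mult[of "m * N'"] that by (simp add: ac_simps)
  ultimately show ?thesis
    by (intro exI[of _ "k * N'"]) (auto simp: N'_def)
qed

lemma radical_r_monomial_span_eq_zero_iff:
  assumes "0 \<notin> S"
  shows "radical_r (monomial_span S) = {0::'a::field poly} \<longleftrightarrow> \<not> (\<exists>d\<ge>1. \<forall>m\<ge>1. m * d \<in> S)"
proof
  assume "radical_r (monomial_span S) = {0::'a poly}"
  moreover have "monom (1::'a) d \<in> radical_r (monomial_span S)" if "\<forall>m\<ge>1. m * d \<in> S" for d
    using that by (auto simp: radical_r_def monom_power monom_in_monomial_span_iff
        intro!: exI[of _ 1] simp: mult.commute)
  ultimately show "\<not> (\<exists>d\<ge>1. \<forall>m\<ge>1. m * d \<in> S)"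
    by (metis monom_eq_0_iff one_neq_zero singletonD)
next
  assume "\<not> (\<exists>d\<ge>1. \<forall>m\<ge>1. m * d \<in> S)"
  hence "a = 0" if "a \<in> radical_r (monomial_span S)" for a :: "'a poly"
  proof -
    from that obtain N where "\<forall>m\<ge>N. a ^ m \<in> monomial_span S"
      by (auto simp: radical_r_def)
    with \<open>\<not> (\<exists>d\<ge>1. \<forall>m\<ge>1. m * d \<in> S)\<close> show "a = 0"
      using multiples_in_support_if_powers_in_monomial_span[OF _ assms] by blast
  qed
  moreover have "(0::'a poly) \<in> radical_r (monomial_span S)"
    by (auto simp: radical_r_def monomial_span_def power_0_left intro!: exI[of _ 1])
  ultimately show "radical_r (monomial_span S) = {0::'a poly}" by blast
qed

lemma mathieu_subspace_if_radical_r_eq_zero: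
  assumes "is_subspace V" and "radical_r V = {0}"
  shows "mathieu_subspace V"
  unfolding mathieu_subspace_def
proof (intro conjI assms(1) allI impI)
  fix a b :: "'a poly"
  assume "\<forall>m\<ge>1. a ^ m \<in> V"
  hence "a \<in> radical_r V" by (auto simp: radical_r_def)
  with assms(2) have "a = 0" by simp
  with assms(1) show "\<exists>N. \<forall>m\<ge>N. a ^ m * b \<in> V"
    by (intro exI[of _ 1]) (auto simp: is_subspace_def power_0_left)
qed

lemma not_mathieu_subspace_monomial_span:
  assumes "d \<ge> 1" and multiples: "\<forall>m\<ge>1. m * d \<in> S" and "infinite (- S)"
  shows "\<not> mathieu_subspace (monomial_span S :: 'a::field poly set)"
proof
  assume mathieu: "mathieu_subspace (monomial_span S :: 'a poly set)"
  have "- S \<subseteq> (\<Union>r<d. {k. k \<notin> S \<and> k mod d = r})"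
    using \<open>d \<ge> 1\<close> by auto
  then obtain r where "r < d" and r_missed: "infinite {k. k \<notin> S \<and> k mod d = r}"
    using \<open>infinite (- S)\<close> by (meson finite_UN_I finite_lessThan finite_subset lessThan_iff)
  have "\<forall>m\<ge>1. monom (1::'a) d ^ m \<in> monomial_span S"
    using multiples by (simp add: monom_power monom_in_monomial_span_iff ac_simps)
  then obtain N where N: "\<forall>m\<ge>N. monom (1::'a) d ^ m * monom 1 r \<in> monomial_span S"
    using mathieu unfolding mathieu_subspace_def by blast
  obtain k where "k \<in> {k. k \<notin> S \<and> k mod d = r}" "N * d \<le> k"
    using r_missed by (meson infinite_nat_iff_unbounded_le)
  hence k: "k \<notin> S" "k mod d = r" "N * d \<le> k" by auto
  have k_eq: "k = (k div d) * d + r"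
    using k(2) by (metis div_mult_mod_eq)
  have "N * d div d \<le> k div d"
    using k(3) by (rule div_le_mono)
  hence "N \<le> k div d" using \<open>d \<ge> 1\<close> by simp
  with N have "monom (1::'a) d ^ (k div d) * monom 1 r \<in> monomial_span S" by blast
  hence "monom (1::'a) k \<in> monomial_span S"
    by (subst k_eq) (simp add: monom_power mult_monom ac_simps)
  with \<open>k \<notin> S\<close> show False by (simp add: monom_in_monomial_span_iff)
qed

lemma infinite_compl_range_if_infinite_gaps:
  fixes n :: "nat \<Rightarrow> nat"
  assumes mono: "strict_mono n" and gaps: "infinite {i. n (Suc i) - n i \<noteq> 1}"
  shows "infinite (- range n)"
proof
  assume "finite (- range n)"
  let ?G = "{i. n (Suc i) - n i \<noteq> 1}"
  have "n i + 1 \<notin> range n" if "i \<in> ?G" for i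
  proof
    assume "n i + 1 \<in> range n"
    then obtain j where j: "n j = n i + 1" by auto
    have "n i < n (Suc i)"
      using mono by (simp add: strict_mono_def)
    hence "n i + 1 < n (Suc i)"
      using that by auto
    with j have "j < Suc i"
      using mono by (metis strict_mono_less)
    moreover have "i < j"
      using j mono by (metis less_add_one strict_mono_less)
    ultimately show False by simp
  qed
  hence "(\<lambda>i. n i + 1) ` ?G \<subseteq> - range n" by (simp add: image_subset_iff)
  moreover have "inj_on (\<lambda>i. n i + 1) ?G"
    using strict_mono_imp_inj_on[OF mono] by (auto simp: inj_on_def)
  ultimately have "finite ?G"
    using \<open>finite (- range n)\<close> finite_subset finite_imageD by blast
  with gaps show False by contradiction
qed

theorem lemma3p4:
  fixes n :: "nat \<Rightarrow> nat"
    and V :: "'a::field poly set"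
  assumes mono: "strict_mono n"
    and pos: "\<forall>i. n i > 0"
    and gaps: "infinite {i. n (Suc i) - n i \<noteq> 1}"
    and V_def: "V = monomial_span (range n)"
  shows "(radical_r V = {0} \<longleftrightarrow> mathieu_subspace V)
       \<and> (mathieu_subspace V \<longleftrightarrow>
            \<not> (\<exists>d::nat. d \<ge> 1 \<and> (\<forall>m::nat. m \<ge> 1 \<longrightarrow> m * d \<in> range n)))"
proof -
  have "0 \<notin> range n" using pos by (metis gr_implies_not0 rangeE)
  hence radical: "radical_r V = {0} \<longleftrightarrow> \<not> (\<exists>d\<ge>1. \<forall>m\<ge>1. m * d \<in> range n)"
    unfolding V_def by (rule radical_r_monomial_span_eq_zero_iff)
  have "mathieu_subspace V \<Longrightarrow> \<not> (\<exists>d\<ge>1. \<forall>m\<ge>1. m * d \<in> range n)"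
    using not_mathieu_subspace_monomial_span infinite_compl_range_if_infinite_gaps[OF mono gaps]
    unfolding V_def by blast
  moreover have "radical_r V = {0} \<Longrightarrow> mathieu_subspace V"
    using mathieu_subspace_if_radical_r_eq_zero is_subspace_monomial_span
    unfolding V_def by blast
  ultimately show ?thesis using radical by blast
qed

end
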